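(* Let $N\geq 1$ be an integer. Then for all $0<x<\pi/2$, \[ 3+\sum_{j=2}^{N}\frac{(2^{2j}-4)|B_{2j}|}{(2j)!}x^{2j}+\rho_N x^{2N+1}\tan x<2\left(\frac{x}{\sin x}\right)+\frac{x}{\tan x}<3+\sum_{j=2}^{N}\frac{(2^{2j}-4)|B_{2j}|}{(2j)!}x^{2j}+\varrho_N x^{2N+1}\tan x, \] with the best possible constants $\rho_N=0$ and $\varrho_N=\dfrac{4(2^{2N}-1)|B_{2N+2}|}{(2N+2)!}$.
   Context: The Bernoulli numbers $B_n$ are defined by $\frac{t}{e^t-1}=\sum_{n=0}^\infty B_n\frac{t^n}{n!}$ for $|t|<2\pi$. An empty sum is understood to be zero. *)

theory Defs
  imports Complex_Main
begin

text \<open>Bernoulli numbers, defined by the exponential generating function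
  t/(e^t - 1) = sum_n B_n t^n / n!  for 0 < |t| < 2 pi (the point t = 0 is
  excluded only because t/(e^t-1) is there defined by continuity).\<close>
definition bernoulli :: "nat \<Rightarrow> real" where
  "bernoulli = (THE B. \<forall>t::real. t \<noteq> 0 \<and> \<bar>t\<bar> < 2 * pi \<longrightarrow>
      (\<lambda>n. B n * t ^ n / fact n) sums (t / (exp t - 1)))"

definition poly_part :: "nat \<Rightarrow> real \<Rightarrow> real" where
  "poly_part N x = 3 + (\<Sum>j=2..N. (2^(2*j) - 4) * \<bar>bernoulli (2*j)\<bar> / fact (2*j) * x ^ (2*j))"

definition mid_expr :: "real \<Rightarrow> real" where
  "mid_expr x = 2 * (x / sin x) + x / tan x"

end

theory Submission
  imports Defs "HOL-Analysis.Analysis"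
begin

(*
  With s_k = (x / (k pi))^2 for k >= 1, Euler's partial fractions x cot x = 1 - sum_k 2 s_k / (1 - s_k),
  applied at x and at x/2, turn the identity 2 x / sin x + x / tan x = 4 (x/2) cot (x/2) - x cot x into
    mid_expr x - 3 = sum_k Phi s_k,   Phi s = 2 s / (1 - s) - 2 s / (1 - s/4) = sum_j (2 - 8 / 4^j) s^j.
  As sum_k s_k^j = zeta (2j) (x / pi)^(2j), Euler's formula for B_2j matches the s^j-part of this
  double series with the j-th term of poly_part, so mid_expr x - poly_part N x = sum_k T_N s_k, where
  T_N is the tail of Phi after degree N. For 0 < s < 1/4 the tail T_N s is positive and lies between
  its leading term c s^(N+1) and c s^(N+1) (1 + pi^2 s / 3); since pi^2 s_k <= x^2 and
  tan x >= x + x^3/3, this gives the upper bound. Both constants are optimal: the upper one is forced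
  as x -> 0, where tan x / x -> 1, and 0 as x -> pi/2, where tan x blows up while mid_expr stays
  bounded.
  Euler's formula itself comes from the same partial fractions at the imaginary point i t / 2: they
  express t / (e^t - 1) as a sum over k of 2 u_k / (1 + u_k), and expanding these geometrically and
  swapping the two sums yields the power series of t / (e^t - 1).
*)

lemma has_sum_suminf_abs:
  fixes f :: "nat \<Rightarrow> real"
  assumes "summable (\<lambda>n. \<bar>f n\<bar>)"
  shows "(f has_sum (\<Sum>n. f n)) UNIV"
proof -
  have "summable (\<lambda>n. norm (f n))"
    using assms by simp
  then show ?thesis
    using norm_summable_imp_has_sum summable_norm_cancel summable_sums by blast
qed

lemma sums_swap_abs:
  fixes f :: "nat \<Rightarrow> nat \<Rightarrow> real"
  assumes abs_rows: "\<And>k. summable (\<lambda>m. \<bar>f k m\<bar>)"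
    and abs_total: "summable (\<lambda>k. \<Sum>m. \<bar>f k m\<bar>)"
  shows "(\<lambda>m. \<Sum>k. f k m) sums (\<Sum>k. \<Sum>m. f k m)"
proof -
  have "((\<lambda>m. \<bar>f k m\<bar>) has_sum (\<Sum>m. \<bar>f k m\<bar>)) UNIV" for k
    by (rule sums_nonneg_imp_has_sum[OF summable_sums[OF abs_rows]]) simp
  moreover have "(\<lambda>k. \<Sum>m. \<bar>f k m\<bar>) summable_on UNIV"
    using abs_total by (rule summable_nonneg_imp_summable_on) (simp add: suminf_nonneg abs_rows)
  ultimately have "(\<lambda>(k, m). \<bar>f k m\<bar>) summable_on UNIV \<times> UNIV"
    by (intro summable_on_SigmaI[where g = "\<lambda>k. \<Sum>m. \<bar>f k m\<bar>"]) simp_all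
  then have "(\<lambda>(k, m). f k m) summable_on UNIV \<times> UNIV"
    using abs_summable_summable[of "\<lambda>(k, m). f k m" "UNIV \<times> UNIV"] by (simp add: case_prod_unfold)
  then obtain S where S: "((\<lambda>(k, m). f k m) has_sum S) (UNIV \<times> UNIV)"
    by (auto simp: summable_on_def)
  have col_abs: "summable (\<lambda>k. \<bar>f k m\<bar>)" for m
  proof (rule summable_comparison_test'[OF abs_total])
    fix k
    show "norm \<bar>f k m\<bar> \<le> (\<Sum>m. \<bar>f k m\<bar>)"
      using sum_le_suminf[OF abs_rows[of k], of "{m}"] by simp
  qed
  have "((\<lambda>k. \<Sum>m. f k m) has_sum S) UNIV"
    using S by (rule has_sum_Sigma') (simp add: has_sum_suminf_abs abs_rows)
  then have S_eq: "(\<Sum>k. \<Sum>m. f k m) = S"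
    by (metis has_sum_imp_sums sums_unique)
  have "((\<lambda>(m, k). f k m) has_sum S) (UNIV \<times> UNIV)"
    using S has_sum_swap[of "\<lambda>(k, m). f k m" UNIV UNIV S] by simp
  then have "((\<lambda>m. \<Sum>k. f k m) has_sum S) UNIV"
    by (rule has_sum_Sigma') (simp add: has_sum_suminf_abs col_abs)
  then show ?thesis
    unfolding S_eq by (rule has_sum_imp_sums)
qed

lemma sums_less:
  fixes f g :: "nat \<Rightarrow> real"
  assumes "\<And>n. f n < g n" "f sums a" "g sums b"
  shows "a < b"
proof -
  have "(\<lambda>n. g n - f n) sums (b - a)"
    using assms(2,3) by (rule sums_diff[rotated])
  then have "0 < b - a"
    using assms(1) suminf_pos[of "\<lambda>n. g n - f n"] by (simp add: sums_iff)
  then show ?thesis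
    by simp
qed

lemma sums_even_odd:
  fixes a :: "nat \<Rightarrow> real"
  assumes "(\<lambda>m. a (2*m)) sums x" "(\<lambda>m. a (2*m+1)) sums y"
  shows "a sums (x + y)"
proof -
  have "(\<lambda>n. if even n then a (2*(n div 2)) else a (2*((n-1) div 2)+1)) sums (y + x)"
    by (rule sums_if[OF assms(2,1)])
  moreover have "(if even n then a (2*(n div 2)) else a (2*((n-1) div 2)+1)) = a n" for n
    by (cases "even n") (simp_all add: odd_two_times_div_two_succ)
  ultimately show ?thesis
    by (simp add: add.commute)
qed

lemma sums_geometric_swap:
  fixes u :: "nat \<Rightarrow> real"
  assumes nonneg: "\<And>k. 0 \<le> u k" and le: "\<And>k. u k \<le> r" and "r < 1" and "summable u"
  shows "(\<lambda>m. \<Sum>k. (-1)^m * u k^(m+1)) sums (\<Sum>k. u k / (1 + u k))"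
proof -
  define f where "f k m = (-1)^m * u k^(m+1)" for k m
  have lt1: "u k < 1" for k
    using le[of k] \<open>r < 1\<close> by linarith
  have row: "(\<lambda>m. f k m) sums (u k / (1 + u k))" for k
  proof -
    have "(\<lambda>m. u k * (- u k)^m) sums (u k * (1 / (1 - - u k)))"
      using nonneg[of k] lt1[of k] by (intro sums_mult geometric_sums) simp
    moreover have "u k * (- u k)^m = f k m" for m
      by (simp add: f_def power_minus[of "u k"] algebra_simps)
    ultimately show ?thesis
      by simp
  qed
  have abs_row: "(\<lambda>m. \<bar>f k m\<bar>) sums (u k / (1 - u k))" for k
  proof -
    have "(\<lambda>m. u k * u k^m) sums (u k * (1 / (1 - u k)))"
      using nonneg[of k] lt1[of k] by (intro sums_mult geometric_sums) simp
    moreover have "u k * u k^m = \<bar>f k m\<bar>" for m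
      using nonneg[of k] by (simp add: f_def abs_mult power_abs algebra_simps)
    ultimately show ?thesis
      by simp
  qed
  have "summable (\<lambda>k. u k / (1 - u k))"
  proof (rule summable_comparison_test')
    show "summable (\<lambda>k. 1 / (1 - r) * u k)"
      using \<open>summable u\<close> by (rule summable_mult)
    show "norm (u k / (1 - u k)) \<le> 1 / (1 - r) * u k" for k
      using nonneg[of k] lt1[of k] le[of k] \<open>r < 1\<close> by (simp add: field_simps mult_right_mono)
  qed
  then have "(\<lambda>m. \<Sum>k. f k m) sums (\<Sum>k. \<Sum>m. f k m)"
    using abs_row by (intro sums_swap_abs) (simp_all add: sums_iff)
  moreover have "(\<Sum>k. \<Sum>m. f k m) = (\<Sum>k. u k / (1 + u k))"
    using row by (simp add: sums_iff)
  ultimately show ?thesis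
    by (simp add: f_def)
qed

lemma powser_sums_zero_imp_coeff_zero:
  fixes c :: "nat \<Rightarrow> 'a::{real_normed_field,banach}"
  assumes "r > 0"
    and zero: "\<And>t. t \<noteq> 0 \<Longrightarrow> norm t < r \<Longrightarrow> (\<lambda>n. c n * t^n) sums 0"
  shows "c m = 0"
proof (induction m rule: less_induct)
  case (less m)
  have "(\<lambda>n. c (n + m) * t^n) sums 0" if t: "t \<noteq> 0" "norm t < r" for t
  proof -
    have "(\<lambda>n. c (n + m) * t^(n + m)) sums 0"
      using zero[OF t] less by (subst sums_zero_iff_shift) simp_all
    then have "(\<lambda>n. c (n + m) * t^(n + m) / t^m) sums (0 / t^m)"
      by (rule sums_divide)
    then show ?thesis
      using t by (simp add: power_add)
  qed
  then have "((\<lambda>_. 0) \<longlongrightarrow> c (0 + m)) (at (0::'a))"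
    by (intro powser_limit_0_strong[OF \<open>r > 0\<close>])
  then show ?case
    using tendsto_unique[OF at_neq_bot _ tendsto_const] by fastforce
qed

lemma powser_unique:
  fixes a b :: "nat \<Rightarrow> 'a::{real_normed_field,banach}"
  assumes "r > 0"
    and "\<And>t. t \<noteq> 0 \<Longrightarrow> norm t < r \<Longrightarrow> (\<lambda>n. a n * t^n) sums f t"
    and "\<And>t. t \<noteq> 0 \<Longrightarrow> norm t < r \<Longrightarrow> (\<lambda>n. b n * t^n) sums f t"
  shows "a = b"
proof
  fix m
  have "(\<lambda>n. (a n - b n) * t^n) sums 0" if "t \<noteq> 0" "norm t < r" for t
    using sums_diff[OF assms(2,3)[OF that]] by (simp add: algebra_simps)
  then show "a m = b m"
    using powser_sums_zero_imp_coeff_zero[OF \<open>r > 0\<close>, of "\<lambda>n. a n - b n" m] by simp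
qed

section \<open>Zeta values and the poles of the cotangent\<close>

definition zeta_nat :: "nat \<Rightarrow> real" where
  "zeta_nat s = (\<Sum>k. 1 / (real k + 1) ^ s)"

lemma summable_zeta_nat:
  assumes "s \<ge> 2"
  shows "summable (\<lambda>k. 1 / (real k + 1) ^ s)"
proof -
  have "summable (\<lambda>k. inverse (real (Suc k) ^ s))"
    using inverse_power_summable[OF assms, where 'a = real] by (subst summable_Suc_iff)
  then show ?thesis
    by (simp add: inverse_eq_divide add.commute)
qed

lemma zeta_nat_nonneg: "s \<ge> 2 \<Longrightarrow> zeta_nat s \<ge> 0"
  unfolding zeta_nat_def by (simp add: suminf_nonneg summable_zeta_nat)

text \<open>\<open>pole_ratio x k\<close> is \<open>x\<^sup>2\<close> over the square of the \<open>(k+1)\<close>-th positive pole of \<open>cot\<close>.\<close>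

definition pole_ratio :: "real \<Rightarrow> nat \<Rightarrow> real" where
  "pole_ratio x k = (x / pi / (real k + 1))^2"

lemma pole_ratio_le: "pole_ratio x k \<le> (x / pi)^2"
proof -
  have "(x / pi)^2 / (real k + 1)^2 \<le> (x / pi)^2 / 1"
    by (rule divide_left_mono) auto
  then show ?thesis
    by (simp only: pole_ratio_def power_divide[of "x / pi"] div_by_1)
qed

lemma pole_ratio_half: "pole_ratio (x/2) k = pole_ratio x k / 4"
  by (simp add: pole_ratio_def power_divide power_mult_distrib)

lemma sums_power_pole_ratio:
  assumes "j \<ge> 1"
  shows "(\<lambda>k. pole_ratio x k ^ j) sums ((x / pi)^(2*j) * zeta_nat (2*j))"
proof -
  have "summable (\<lambda>k. 1 / (real k + 1)^(2*j))"
    using assms by (intro summable_zeta_nat) simp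
  then have "(\<lambda>k. (x / pi)^(2*j) * (1 / (real k + 1)^(2*j))) sums ((x / pi)^(2*j) * zeta_nat (2*j))"
    unfolding zeta_nat_def by (rule sums_mult[OF summable_sums])
  moreover have "(\<lambda>k. pole_ratio x k ^ j) = (\<lambda>k. (x / pi)^(2*j) * (1 / (real k + 1)^(2*j)))"
    by (simp add: fun_eq_iff pole_ratio_def power_mult[symmetric] power_divide power_mult_distrib)
  ultimately show ?thesis
    by simp
qed

section \<open>Partial fractions of the cotangent\<close>

lemma Digamma_reflection_complex:
  fixes z :: complex
  assumes z: "z \<notin> \<int>"
  shows "Digamma (1 - z) - Digamma z = of_real pi * cot (of_real pi * z)"
proof -
  define G where "G w = Gamma w * Gamma (1 - w) * sin (of_real pi * w)" for w :: complex
  have one_minus_z: "1 - z \<notin> \<int>"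
    using z Ints_diff[of 1 "1 - z"] by auto
  have poles: "z \<notin> \<int>\<^sub>\<le>\<^sub>0" "1 - z \<notin> \<int>\<^sub>\<le>\<^sub>0"
    using z one_minus_z nonpos_Ints_subset_Ints by blast+
  have sin_nz: "sin (of_real pi * w) \<noteq> 0" if "w \<notin> \<int>" for w :: complex
    using that by (subst sin_eq_0) auto
  \<comment> \<open>By the reflection formula \<open>G\<close> is constant near \<open>z\<close>; its logarithmic derivative gives the claim.\<close>
  have "eventually (\<lambda>w. w \<in> - \<int>) (nhds z)"
    using z by (intro eventually_nhds_in_open) (auto simp: open_Compl closed_Ints)
  then have "eventually (\<lambda>w. G w = of_real pi) (nhds z)"
    by eventually_elim (use sin_nz in \<open>simp add: G_def Gamma_reflection_complex\<close>)
  then have "(G has_field_derivative 0) (at z)"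
    by (subst DERIV_cong_ev[OF refl _ refl]) (auto intro: DERIV_const)
  moreover have "(G has_field_derivative Gamma z * Gamma (1 - z) *
      ((Digamma z - Digamma (1 - z)) * sin (of_real pi * z) + of_real pi * cos (of_real pi * z))) (at z)"
    unfolding G_def using poles by (auto intro!: derivative_eq_intros simp: algebra_simps)
  ultimately have "Gamma z * Gamma (1 - z) *
      ((Digamma z - Digamma (1 - z)) * sin (of_real pi * z) + of_real pi * cos (of_real pi * z)) = 0"
    using DERIV_unique by blast
  then have "(Digamma z - Digamma (1 - z)) * sin (of_real pi * z) + of_real pi * cos (of_real pi * z) = 0"
    using poles by (simp add: Gamma_eq_zero_iff)
  then show ?thesis
    using sin_nz[OF z] by (simp add: cot_def field_simps)
qed

lemma inverse_sum_minus_inverse_diff: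
  fixes w a :: "'a::field"
  assumes "w + a \<noteq> 0" "a - w \<noteq> 0"
  shows "w * (inverse (w + a) - inverse (a - w)) = 2 * w^2 / (w^2 - a^2)"
proof -
  have "w^2 - a^2 = - ((w + a) * (a - w))"
    by (simp add: algebra_simps power2_eq_square)
  moreover have "a * a - w * w \<noteq> 0"
    using assms by (simp add: square_diff_square_factored add.commute)
  then have "w * (inverse (w + a) - inverse (a - w)) * (- ((w + a) * (a - w))) = 2 * w^2"
    using assms by (simp add: field_simps power2_eq_square)
  ultimately show ?thesis
    using assms by (intro eq_divide_imp) simp_all
qed

lemma cot_partial_fractions:
  fixes w :: complex
  assumes w: "w \<notin> \<int>"
  shows "(\<lambda>k. 2 * w^2 / (w^2 - (of_nat k + 1)^2)) sums (of_real pi * w * cot (of_real pi * w) - 1)"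
proof -
  have pole_plus: "w + (of_nat k + 1) \<noteq> 0" for k
  proof
    assume "w + (of_nat k + 1) = 0"
    then have "w = - (of_nat k + 1)"
      by (simp only: eq_neg_iff_add_eq_0)
    with w show False
      by (metis Ints_1 Ints_add Ints_minus Ints_of_nat)
  qed
  have pole_minus: "of_nat k + 1 - w \<noteq> 0" for k
  proof
    assume "of_nat k + 1 - w = 0"
    then have "w = of_nat k + 1"
      by simp
    with w show False
      by (metis Ints_1 Ints_add Ints_of_nat)
  qed
  have Digamma_sums: "(\<lambda>k. inverse (of_nat (Suc k)) - inverse (v + of_nat k)) sums (Digamma v + euler_mascheroni)"
    if "v \<noteq> 0" for v :: complex
    using summable_sums[OF summable_Digamma[OF that]] by (simp add: Digamma_def)
  \<comment> \<open>Up to the factor \<open>w\<close>, the series of \<open>Digamma (1 - w) - Digamma (w + 1)\<close> is termwise the claimed one.\<close>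
  have "(\<lambda>k. (inverse (of_nat (Suc k)) - inverse ((1 - w) + of_nat k))
          - (inverse (of_nat (Suc k)) - inverse ((w + 1) + of_nat k)))
        sums ((Digamma (1 - w) + euler_mascheroni) - (Digamma (w + 1) + euler_mascheroni))"
    using pole_plus[of 0] pole_minus[of 0] by (intro sums_diff Digamma_sums) (simp_all add: add.commute)
  moreover have "Digamma (w + 1) = Digamma w + 1 / w"
    using w by (intro Digamma_plus1) auto
  ultimately have "(\<lambda>k. w * (inverse ((w + 1) + of_nat k) - inverse ((1 - w) + of_nat k)))
      sums (w * (of_real pi * cot (of_real pi * w) - 1 / w))"
    using Digamma_reflection_complex[OF w] by (intro sums_mult) (simp add: algebra_simps)
  moreover have "w * (inverse ((w + 1) + of_nat k) - inverse ((1 - w) + of_nat k))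
      = 2 * w^2 / (w^2 - (of_nat k + 1)^2)" for k
    using inverse_sum_minus_inverse_diff[OF pole_plus[of k] pole_minus[of k]]
    by (simp add: algebra_simps)
  moreover have "w \<noteq> 0"
    using w by auto
  ultimately show ?thesis
    by (simp add: algebra_simps)
qed

lemma cot_partial_fractions_real_square:
  fixes w :: complex and W :: real
  assumes "w \<notin> \<int>" "w^2 = of_real W"
  shows "(\<lambda>k. complex_of_real (- (2 * (W / (real k + 1)^2) / (1 - W / (real k + 1)^2))))
    sums (of_real pi * w * cot (of_real pi * w) - 1)"
proof -
  have summand: "2 * w^2 / (w^2 - (of_nat k + 1)^2)
      = complex_of_real (- (2 * (W / (real k + 1)^2) / (1 - W / (real k + 1)^2)))" for k
  proof -
    define n where "n = (real k + 1)^2"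
    have "n > 0"
      by (simp add: n_def)
    have "W \<noteq> n"
    proof
      assume "W = n"
      then have "w^2 = (of_nat k + 1)^2"
        using assms(2) by (simp add: n_def)
      then have "w = of_nat k + 1 \<or> w = - (of_nat k + 1)"
        by (simp add: power2_eq_iff)
      then show False
        using assms(1) by (metis Ints_1 Ints_add Ints_minus Ints_of_nat)
    qed
    then have "W - n \<noteq> 0" "n - W \<noteq> 0"
      by simp_all
    then have "2 * W / (W - n) = - (2 * (W / n) / (1 - W / n))"
      using \<open>n > 0\<close> by (simp add: field_simps)
    moreover have "2 * w^2 / (w^2 - (of_nat k + 1)^2) = complex_of_real (2 * W / (W - n))"
      using assms(2) by (simp add: n_def)
    ultimately show ?thesis
      by (simp add: n_def)
  qed
  show ?thesis
    using cot_partial_fractions[OF assms(1)] by (simp only: summand)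
qed

lemma x_cot_x_partial_fractions:
  fixes x :: real
  assumes "x / pi \<notin> \<int>"
  shows "(\<lambda>k. - (2 * pole_ratio x k / (1 - pole_ratio x k))) sums (x * cot x - 1)"
proof -
  have "complex_of_real (x / pi) \<notin> \<int>"
    unfolding of_real_in_Ints_iff by (rule assms)
  from cot_partial_fractions_real_square[OF this, of "(x / pi)^2"]
  have "(\<lambda>k. complex_of_real (- (2 * pole_ratio x k / (1 - pole_ratio x k))))
      sums complex_of_real (x * cot x - 1)"
    by (simp add: pole_ratio_def power_divide power_mult_distrib cot_of_real)
  then show ?thesis
    by (simp only: sums_of_real_iff)
qed

lemma i_times_cot_i_times_of_real:
  fixes y :: real
  shows "(\<i> * of_real y) * cot (\<i> * of_real y) = of_real (y * cosh y / sinh y)"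
proof -
  have "cos (\<i> * of_real y) = of_real (cosh y)" "sin (\<i> * of_real y) = \<i> * of_real (sinh y)"
    by (simp_all add: cos_i_times sin_i_times cosh_field_def sinh_field_def exp_of_real exp_minus)
  then show ?thesis
    by (simp add: cot_def)
qed

lemma half_times_coth_half:
  fixes t :: real
  assumes "t \<noteq> 0"
  shows "t / 2 * cosh (t / 2) / sinh (t / 2) = t / (exp t - 1) + t / 2"
proof -
  define E where "E = exp (t / 2)"
  have "exp t = E^2"
    by (simp add: E_def power2_eq_square flip: exp_add)
  then have "E > 0" "E * E \<noteq> 1"
    using assms by (auto simp: E_def power2_eq_square)
  then show ?thesis
    unfolding cosh_field_def sinh_field_def exp_minus E_def[symmetric] \<open>exp t = E^2\<close>
    by (simp add: field_simps power2_eq_square)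
qed

lemma t_div_exp_minus_one_partial_fractions:
  fixes t :: real
  assumes "t \<noteq> 0"
  shows "(\<lambda>k. 2 * pole_ratio (t/2) k / (1 + pole_ratio (t/2) k)) sums (t / (exp t - 1) - 1 + t / 2)"
proof -
  \<comment> \<open>At the imaginary point \<open>w\<close> the expansion of \<open>pi w cot (pi w)\<close> becomes one of \<open>t/2 * coth (t/2)\<close>.\<close>
  define w where "w = \<i> * complex_of_real (t / 2 / pi)"
  have w_not_int: "w \<notin> \<int>"
    using assms by (simp add: w_def complex_is_Int_iff)
  have w_square: "w^2 = complex_of_real (- ((t / 2 / pi)^2))"
    by (simp add: w_def power_mult_distrib power_divide)
  have summand: "- (2 * (- ((t / 2 / pi)^2) / (real k + 1)^2) / (1 - - ((t / 2 / pi)^2) / (real k + 1)^2))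
      = 2 * pole_ratio (t/2) k / (1 + pole_ratio (t/2) k)" for k
  proof -
    have "- ((t / 2 / pi)^2) / (real k + 1)^2 = - pole_ratio (t/2) k"
      by (simp add: pole_ratio_def power_divide power_mult_distrib)
    then show ?thesis
      by simp
  qed
  have "of_real pi * w = \<i> * complex_of_real (t / 2)"
    by (simp add: w_def)
  then have cot_value: "of_real pi * w * cot (of_real pi * w) - 1
      = complex_of_real (t / (exp t - 1) - 1 + t / 2)"
    by (simp only: i_times_cot_i_times_of_real half_times_coth_half[OF assms]) simp
  have "(\<lambda>k. complex_of_real (2 * pole_ratio (t/2) k / (1 + pole_ratio (t/2) k)))
      sums (of_real pi * w * cot (of_real pi * w) - 1)"
    using cot_partial_fractions_real_square[OF w_not_int w_square] by (simp only: summand)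
  then show ?thesis
    unfolding cot_value by (simp only: sums_of_real_iff)
qed

lemma t_div_exp_minus_one_even_powser:
  fixes t :: real
  assumes "t \<noteq> 0" "\<bar>t\<bar> < 2 * pi"
  shows "(\<lambda>m. (-1)^m * 2 * zeta_nat (2*m+2) * (t / (2*pi))^(2*m+2))
    sums (t / (exp t - 1) - 1 + t / 2)"
proof -
  define u where "u = pole_ratio (t/2)"
  have "\<bar>t / 2 / pi\<bar> < 1"
    using assms by (simp add: abs_divide)
  then have "(t / 2 / pi)^2 < 1"
    by (simp add: abs_square_less_1)
  moreover have "summable u"
    using sums_summable[OF sums_power_pole_ratio[of 1 "t/2"]] by (simp add: u_def)
  moreover have "0 \<le> u k" "u k \<le> (t / 2 / pi)^2" for k
    unfolding u_def by (simp add: pole_ratio_def) (rule pole_ratio_le)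
  ultimately have swap: "(\<lambda>m. \<Sum>k. (-1)^m * u k^(m+1)) sums (\<Sum>k. u k / (1 + u k))"
    by (intro sums_geometric_swap[where r = "(t / 2 / pi)^2"])
  have "(\<lambda>k. u k / (1 + u k)) sums ((t / (exp t - 1) - 1 + t / 2) / 2)"
  proof -
    have "(\<lambda>k. 2 * u k / (1 + u k) / 2) sums ((t / (exp t - 1) - 1 + t / 2) / 2)"
      unfolding u_def by (rule sums_divide[OF t_div_exp_minus_one_partial_fractions[OF assms(1)]])
    moreover have "2 * a / (1 + a) / 2 = a / (1 + a)" for a :: real
      by (cases "1 + a = 0") (simp_all add: field_simps)
    ultimately show ?thesis
      by (simp only:)
  qed
  moreover have "(\<Sum>k. (-1)^m * u k^(m+1)) = (-1)^m * zeta_nat (2*m+2) * (t / (2*pi))^(2*m+2)" for m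
  proof -
    have "(\<lambda>k. (-1)^m * u k^(m+1)) sums ((-1)^m * ((t / 2 / pi)^(2*(m+1)) * zeta_nat (2*(m+1))))"
      unfolding u_def by (intro sums_mult sums_power_pole_ratio) simp
    then show ?thesis
      by (simp add: sums_iff mult_ac)
  qed
  ultimately have "(\<lambda>m. (-1)^m * zeta_nat (2*m+2) * (t / (2*pi))^(2*m+2))
      sums ((t / (exp t - 1) - 1 + t / 2) / 2)"
    using swap by (simp add: sums_iff)
  then have "(\<lambda>m. 2 * ((-1)^m * zeta_nat (2*m+2) * (t / (2*pi))^(2*m+2)))
      sums (2 * ((t / (exp t - 1) - 1 + t / 2) / 2))"
    by (rule sums_mult)
  moreover have "2 * ((t / (exp t - 1) - 1 + t / 2) / 2) = t / (exp t - 1) - 1 + t / 2"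
    by simp
  ultimately show ?thesis
    by (simp only: mult_ac)
qed

section \<open>Euler's formula for the Bernoulli numbers\<close>

lemma bernoulli_eqI:
  assumes "\<And>t. t \<noteq> 0 \<Longrightarrow> \<bar>t\<bar> < 2 * pi \<Longrightarrow> (\<lambda>n. B n * t^n / fact n) sums (t / (exp t - 1))"
  shows "bernoulli = B"
  unfolding bernoulli_def
proof (rule the_equality)
  fix B' :: "nat \<Rightarrow> real"
  assume B': "\<forall>t. t \<noteq> 0 \<and> \<bar>t\<bar> < 2 * pi \<longrightarrow> (\<lambda>n. B' n * t^n / fact n) sums (t / (exp t - 1))"
  have "(\<lambda>n. B' n / fact n) = (\<lambda>n. B n / fact n)"
    by (rule powser_unique[of "2 * pi" _ "\<lambda>t. t / (exp t - 1)"])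
      (use B' assms in \<open>simp_all add: field_simps\<close>)
  then show "B' = B"
    by (simp add: fun_eq_iff)
qed (use assms in simp)

lemma bernoulli_even:
  assumes "m \<ge> 1"
  shows "bernoulli (2*m) = (-1)^(m+1) * 2 * fact (2*m) * zeta_nat (2*m) / (2*pi)^(2*m)"
proof -
  define B where "B n = (if n = 0 then 1 else if n = 1 then -1/2 else if odd n then 0
      else (-1)^(n div 2 + 1) * 2 * fact n * zeta_nat n / (2*pi)^n)" for n
  have "bernoulli = B"
  proof (rule bernoulli_eqI)
    fix t :: real
    assume t: "t \<noteq> 0" "\<bar>t\<bar> < 2 * pi"
    have "B (2*(m+1)) * t^(2*(m+1)) / fact (2*(m+1))
        = (-1)^m * 2 * zeta_nat (2*m+2) * (t / (2*pi))^(2*m+2)" for m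
      by (simp add: B_def power_divide)
    then have "(\<lambda>m. B (2*(m+1)) * t^(2*(m+1)) / fact (2*(m+1))) sums (t / (exp t - 1) - 1 + t / 2)"
      using t_div_exp_minus_one_even_powser[OF t] by simp
    then have even: "(\<lambda>m. B (2*m) * t^(2*m) / fact (2*m)) sums (t / (exp t - 1) + t / 2)"
      using sums_Suc_iff[of "\<lambda>m. B (2*m) * t^(2*m) / fact (2*m)"] by (simp add: B_def)
    have "B (2*m+1) * t^(2*m+1) / fact (2*m+1) = (if m = 0 then - t / 2 else 0)" for m
      by (simp add: B_def)
    then have odd: "(\<lambda>m. B (2*m+1) * t^(2*m+1) / fact (2*m+1)) sums (- t / 2)"
      using sums_single[of 0 "\<lambda>_. - t / 2"] by simp
    show "(\<lambda>n. B n * t^n / fact n) sums (t / (exp t - 1))"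
      using sums_even_odd[OF even odd] by simp
  qed
  moreover have "B (2*m) = (-1)^(m+1) * 2 * fact (2*m) * zeta_nat (2*m) / (2*pi)^(2*m)"
    using assms by (simp add: B_def)
  ultimately show ?thesis
    by simp
qed

lemma abs_bernoulli_even:
  assumes "m \<ge> 1"
  shows "\<bar>bernoulli (2*m)\<bar> = 2 * fact (2*m) * zeta_nat (2*m) / (2*pi)^(2*m)"
  using assms zeta_nat_nonneg[of "2*m"] by (simp add: bernoulli_even abs_mult)

section \<open>The series expansion of \<open>mid_expr\<close> and its tails\<close>

text \<open>
  \<open>\<Phi> s = 2 s / (1 - s) - 2 s / (1 - s/4) = (\<Sum>j\<ge>1. mid_coeff j * s^j)\<close> satisfies
  \<open>mid_expr x - 3 = (\<Sum>k. \<Phi> (pole_ratio x k))\<close>; \<open>mid_tail N\<close> is the tail of this power series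
  after degree \<open>N\<close>, so that \<open>\<Phi> = mid_tail 0\<close>.
\<close>

definition mid_coeff :: "nat \<Rightarrow> real" where
  "mid_coeff j = 2 - 8 / 4^j"

definition mid_tail :: "nat \<Rightarrow> real \<Rightarrow> real" where
  "mid_tail N s = 2 * (s^(N+1) / (1 - s)) - 8 * ((s/4)^(N+1) / (1 - s/4))"

lemma geometric_tail_step:
  fixes q :: real
  assumes "q \<noteq> 1"
  shows "q^n / (1 - q) = q^n + q^(n+1) / (1 - q)"
  using assms by (simp add: field_simps)

lemma mid_coeff_times_power: "mid_coeff j * s^j = 2 * s^j - 8 * (s/4)^j"
  by (simp add: mid_coeff_def power_divide algebra_simps)

lemma mid_tail_Suc:
  assumes "s \<noteq> 1" "s \<noteq> 4"
  shows "mid_tail N s = mid_coeff (N+1) * s^(N+1) + mid_tail (N+1) s"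
  using geometric_tail_step[of s "N+1"] geometric_tail_step[of "s/4" "N+1"] assms
    mid_coeff_times_power[of "N+1" s]
  unfolding mid_tail_def by linarith

lemma mid_tail_0_eq_sum:
  assumes "s \<noteq> 1" "s \<noteq> 4"
  shows "mid_tail 0 s = (\<Sum>j=1..N. mid_coeff j * s^j) + mid_tail N s"
proof (induction N)
  case (Suc N)
  then show ?case
    using mid_tail_Suc[OF assms, of N] by simp
qed simp

lemma mid_coeff_ge:
  assumes "j \<ge> 2"
  shows "mid_coeff j \<ge> 3/2"
proof -
  have "(4::real)^j \<ge> 4^2"
    using assms by (intro power_increasing) auto
  then show ?thesis
    by (simp add: mid_coeff_def field_simps)
qed

lemma mid_tail_pos:
  assumes "0 < s" "s < 1"
  shows "0 < mid_tail N s"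
proof -
  have "8 * (s/4)^(N+1) = 2 * s^(N+1) / 4^N"
    by (simp add: power_divide)
  also have "\<dots> \<le> 2 * s^(N+1)"
    using divide_left_mono[of 1 "4^N" "2 * s^(N+1)"] assms by simp
  finally have "8 * (s/4)^(N+1) / (1 - s/4) \<le> 2 * s^(N+1) / (1 - s/4)"
    using assms by (intro divide_right_mono) auto
  also have "\<dots> < 2 * s^(N+1) / (1 - s)"
    using assms by (intro divide_strict_left_mono) auto
  finally show ?thesis
    unfolding mid_tail_def times_divide_eq_right by linarith
qed

lemma mid_tail_le:
  assumes "0 \<le> s" "s \<le> 1/4"
  shows "mid_tail N s \<le> 8/3 * s^(N+1)"
proof -
  have "mid_tail N s \<le> 2 * (s^(N+1) / (1 - s))"
    using assms by (simp add: mid_tail_def)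
  also have "\<dots> \<le> 2 * (s^(N+1) / (3/4))"
    using assms by (intro mult_left_mono divide_left_mono) auto
  finally show ?thesis
    by simp
qed

lemma mid_tail_less:
  assumes "N \<ge> 1" "0 < s" "s \<le> 1/4"
  shows "mid_tail N s < mid_coeff (N+1) * s^(N+1) * (1 + pi^2 * s / 3)"
proof -
  have "3^2 < pi^2"
    using pi_gt3 by (intro power_strict_mono) auto
  then have "3/2 * 3^2 \<le> mid_coeff (N+1) * pi^2"
    using mid_coeff_ge[of "N+1"] assms(1) by (intro mult_mono) auto
  then have "8/3 * s^(N+2) < mid_coeff (N+1) * pi^2 / 3 * s^(N+2)"
    using assms by (intro mult_strict_right_mono) auto
  moreover have "mid_tail N s = mid_coeff (N+1) * s^(N+1) + mid_tail (N+1) s"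
    using assms by (intro mid_tail_Suc) auto
  moreover have "mid_tail (N+1) s \<le> 8/3 * s^(N+2)"
    using mid_tail_le[of s "N+1"] assms by simp
  moreover have "mid_coeff (N+1) * s^(N+1) * (1 + pi^2 * s / 3)
      = mid_coeff (N+1) * s^(N+1) + mid_coeff (N+1) * pi^2 / 3 * s^(N+2)"
    by (simp add: algebra_simps)
  ultimately show ?thesis
    by linarith
qed

lemma pole_ratio_bounds:
  assumes "0 < x" "x < pi/2"
  shows "0 < pole_ratio x k" "pole_ratio x k < 1/4" "pi^2 * pole_ratio x k \<le> x^2"
proof -
  show "0 < pole_ratio x k"
    using assms by (simp add: pole_ratio_def)
  have "(x / pi)^2 < (1/2)^2"
    using assms by (intro power_strict_mono) (auto simp: field_simps)
  moreover have "(1/2::real)^2 = 1/4"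
    by (simp add: power2_eq_square)
  ultimately show "pole_ratio x k < 1/4"
    using pole_ratio_le[of x k] by linarith
  show "pi^2 * pole_ratio x k \<le> x^2"
    using mult_left_mono[OF pole_ratio_le[of x k], of "pi^2"] by (simp add: power_divide)
qed

lemma not_Ints_between_0_1: "0 < (y::real) \<Longrightarrow> y < 1 \<Longrightarrow> y \<notin> \<int>"
  using Ints_nonzero_abs_less1[of y] by auto

lemma mid_expr_cot:
  assumes "sin x \<noteq> 0"
  shows "mid_expr x = 4 * (x/2 * cot (x/2)) - x * cot x"
proof -
  define a b where "a = sin (x/2)" and "b = cos (x/2)"
  have "sin x = 2 * a * b" "cos x = b^2 - a^2" "a^2 + b^2 = 1"
    using sin_double[of "x/2"] cos_double[of "x/2"] by (simp_all add: a_def b_def)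
  moreover have "a \<noteq> 0" "b \<noteq> 0"
    using assms \<open>sin x = 2 * a * b\<close> by auto
  ultimately have "1 / sin x = cot (x/2) - cot x"
    by (simp add: cot_def a_def[symmetric] b_def[symmetric] field_simps power2_eq_square)
  then have "x / sin x = x * cot (x/2) - x * cot x"
    by (metis mult_1_right times_divide_eq_right right_diff_distrib)
  moreover have "x / tan x = x * cot x"
    by (simp add: tan_def cot_def)
  moreover have "4 * (x/2 * cot (x/2)) = 2 * (x * cot (x/2))"
    by simp
  ultimately show ?thesis
    unfolding mid_expr_def by linarith
qed

lemma mid_expr_sums:
  assumes "0 < x" "x < pi"
  shows "(\<lambda>k. mid_tail 0 (pole_ratio x k)) sums (mid_expr x - 3)"
proof -
  have "x / pi \<notin> \<int>" "x / 2 / pi \<notin> \<int>"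
    using assms by (intro not_Ints_between_0_1; simp add: field_simps)+
  note cot_x = x_cot_x_partial_fractions[OF this(1)]
    and cot_half = x_cot_x_partial_fractions[OF this(2), unfolded pole_ratio_half]
  have "(\<lambda>k. 4 * - (2 * (pole_ratio x k / 4) / (1 - pole_ratio x k / 4))
      - - (2 * pole_ratio x k / (1 - pole_ratio x k)))
      sums (4 * (x / 2 * cot (x / 2) - 1) - (x * cot x - 1))"
    by (intro sums_diff sums_mult cot_half cot_x)
  moreover have "4 * - (2 * q / (1 - q)) - - (2 * s / (1 - s))
      = 2 * (s^(0+1) / (1 - s)) - 8 * (q^(0+1) / (1 - q))" for q s :: real
    by (simp add: algebra_simps)
  ultimately have "(\<lambda>k. mid_tail 0 (pole_ratio x k))
      sums (4 * (x / 2 * cot (x / 2) - 1) - (x * cot x - 1))"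
    unfolding mid_tail_def by (simp only:)
  moreover have "4 * (x / 2 * cot (x / 2) - 1) - (x * cot x - 1) = mid_expr x - 3"
    using mid_expr_cot[of x] assms sin_gt_zero[of x] by simp
  ultimately show ?thesis
    by simp
qed

lemma bernoulli_term_zeta:
  assumes "j \<ge> 1"
  shows "(2^(2*j) - 4) * \<bar>bernoulli (2*j)\<bar> / fact (2*j) * x^(2*j)
    = mid_coeff j * zeta_nat (2*j) * (x/pi)^(2*j)"
proof -
  define Q P where "Q = (4::real)^j" and "P = pi^(2*j)"
  have "Q > 0" "P > 0"
    by (simp_all add: Q_def P_def)
  have "(2::real)^(2*j) = Q" "(2*pi)^(2*j) = Q * P"
    by (simp_all add: Q_def P_def power_mult power_mult_distrib)
  moreover have "\<bar>bernoulli (2*j)\<bar> = 2 * fact (2*j) * zeta_nat (2*j) / (2*pi)^(2*j)"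
    by (rule abs_bernoulli_even[OF assms])
  ultimately have "(2^(2*j) - 4) * \<bar>bernoulli (2*j)\<bar> / fact (2*j) * x^(2*j)
      = (Q - 4) * (2 * fact (2*j) * zeta_nat (2*j) / (Q * P)) / fact (2*j) * x^(2*j)"
    by (simp only:)
  also have "\<dots> = (2 - 8 / Q) * zeta_nat (2*j) * (x^(2*j) / P)"
    using \<open>Q > 0\<close> \<open>P > 0\<close> by (simp add: field_simps)
  also have "\<dots> = mid_coeff j * zeta_nat (2*j) * (x/pi)^(2*j)"
    by (simp add: mid_coeff_def Q_def P_def power_divide)
  finally show ?thesis .
qed

lemma mid_coeff_power_sums:
  assumes "j \<ge> 1"
  shows "(\<lambda>k. mid_coeff j * pole_ratio x k ^ j) sums (mid_coeff j * zeta_nat (2*j) * (x/pi)^(2*j))"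
  using sums_mult[OF sums_power_pole_ratio[OF assms], of "mid_coeff j"] by (simp add: mult_ac)

lemma poly_part_eq:
  "poly_part N x = 3 + (\<Sum>j=1..N. mid_coeff j * zeta_nat (2*j) * (x/pi)^(2*j))"
proof (cases "N = 0")
  case False
  have "(\<Sum>j=1..N. mid_coeff j * zeta_nat (2*j) * (x/pi)^(2*j))
      = (\<Sum>j=2..N. mid_coeff j * zeta_nat (2*j) * (x/pi)^(2*j))"
    using False by (simp add: sum.atLeast_Suc_atMost mid_coeff_def numeral_2_eq_2)
  also have "\<dots> = (\<Sum>j=2..N. (2^(2*j) - 4) * \<bar>bernoulli (2*j)\<bar> / fact (2*j) * x^(2*j))"
    by (intro sum.cong refl bernoulli_term_zeta[symmetric]) simp
  finally show ?thesis
    by (simp add: poly_part_def)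
qed (simp add: poly_part_def)

lemma mid_expr_minus_poly_part_sums:
  assumes "0 < x" "x < pi/2"
  shows "(\<lambda>k. mid_tail N (pole_ratio x k)) sums (mid_expr x - poly_part N x)"
proof -
  have "(\<lambda>k. mid_tail 0 (pole_ratio x k) - (\<Sum>j=1..N. mid_coeff j * pole_ratio x k ^ j))
      sums (mid_expr x - 3 - (\<Sum>j=1..N. mid_coeff j * zeta_nat (2*j) * (x/pi)^(2*j)))"
    using assms by (intro sums_diff mid_expr_sums sums_sum mid_coeff_power_sums) auto
  moreover have "mid_tail 0 (pole_ratio x k) - (\<Sum>j=1..N. mid_coeff j * pole_ratio x k ^ j)
      = mid_tail N (pole_ratio x k)" for k
    using mid_tail_0_eq_sum[of "pole_ratio x k" N] pole_ratio_bounds(2)[OF assms, of k] by simp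
  ultimately show ?thesis
    by (simp add: poly_part_eq diff_diff_eq)
qed

section \<open>The bounds and their optimality\<close>

lemma tan_ge_self:
  assumes "0 \<le> x" "x < pi/2"
  shows "x \<le> tan x"
proof -
  have "tan 0 - 0 \<le> tan x - x"
  proof (rule DERIV_nonneg_imp_nondecreasing[OF assms(1)])
    fix t
    assume t: "0 \<le> t" "t \<le> x"
    then have "cos t \<noteq> 0"
      using assms cos_gt_zero_pi[of t] by auto
    then have "inverse ((cos t)^2) = 1 + (tan t)^2"
      by (simp add: tan_sec power_inverse)
    with \<open>cos t \<noteq> 0\<close> have "((\<lambda>t. tan t - t) has_real_derivative (tan t)^2) (at t)"
      by (auto intro!: derivative_eq_intros)
    then show "\<exists>y. ((\<lambda>t. tan t - t) has_real_derivative y) (at t) \<and> 0 \<le> y"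
      by auto
  qed
  then show ?thesis
    by simp
qed

lemma tan_ge_cubic:
  assumes "0 \<le> x" "x < pi/2"
  shows "x + x^3/3 \<le> tan x"
proof -
  have "tan 0 - 0 - 0^3/3 \<le> tan x - x - x^3/3"
  proof (rule DERIV_nonneg_imp_nondecreasing[OF assms(1)])
    fix t
    assume t: "0 \<le> t" "t \<le> x"
    then have "cos t \<noteq> 0"
      using assms cos_gt_zero_pi[of t] by auto
    then have "inverse ((cos t)^2) = 1 + (tan t)^2"
      by (simp add: tan_sec power_inverse)
    with \<open>cos t \<noteq> 0\<close> have "((\<lambda>t. tan t - t - t^3/3) has_real_derivative (tan t)^2 - t^2) (at t)"
      by (auto intro!: derivative_eq_intros)
    moreover have "t^2 \<le> (tan t)^2"
      using t assms tan_ge_self[of t] by (intro power_mono) auto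
    ultimately show "\<exists>y. ((\<lambda>t. tan t - t - t^3/3) has_real_derivative y) (at t) \<and> 0 \<le> y"
      by auto
  qed
  then show ?thesis
    by simp
qed

lemma tan_over_self_tendsto: "((\<lambda>x. tan x / x) \<longlongrightarrow> 1) (at (0::real))"
proof -
  have "(tan has_field_derivative 1) (at (0::real))"
    using DERIV_tan[of 0] by simp
  then show ?thesis
    by (simp add: has_field_derivative_iff)
qed

definition varrho :: "nat \<Rightarrow> real" where
  "varrho N = 4 * (2^(2*N) - 1) * \<bar>bernoulli (2*N+2)\<bar> / fact (2*N+2)"

lemma varrho_nonneg: "varrho N \<ge> 0"
proof -
  have "(1::real) \<le> 2^(2*N)"
    by simp
  then show ?thesis
    by (simp add: varrho_def)
qed

lemma varrho_sums:
  "(\<lambda>k. mid_coeff (N+1) * pole_ratio x k ^ (N+1)) sums (varrho N * x^(2*N+2))"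
proof -
  have "(2::real)^(2*(N+1)) - 4 = 4 * (2^(2*N) - 1)"
    by (simp add: power_add)
  then have "varrho N * x^(2*N+2)
      = (2^(2*(N+1)) - 4) * \<bar>bernoulli (2*(N+1))\<bar> / fact (2*(N+1)) * x^(2*(N+1))"
    by (simp add: varrho_def)
  then show ?thesis
    using mid_coeff_power_sums[of "N+1" x] bernoulli_term_zeta[of "N+1" x] by simp
qed

lemma poly_part_ge_3: "3 \<le> poly_part N x"
proof -
  have "(2::real)^(2*j) - 4 \<ge> 0" if "j \<ge> 2" for j
  proof -
    have "(2::real)^2 \<le> 2^(2*j)"
      using that by (intro power_increasing) auto
    then show ?thesis
      by simp
  qed
  then show ?thesis
    unfolding poly_part_def by (auto intro!: sum_nonneg simp: power_mult)
qed

lemma poly_part_less_mid_expr: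
  assumes "0 < x" "x < pi/2"
  shows "poly_part N x < mid_expr x"
proof -
  have "0 < mid_tail N (pole_ratio x k)" for k
    using pole_ratio_bounds[OF assms, of k] by (intro mid_tail_pos) auto
  then have "0 < mid_expr x - poly_part N x"
    using sums_less[OF _ sums_zero mid_expr_minus_poly_part_sums[OF assms]] by blast
  then show ?thesis
    by simp
qed

lemma varrho_le_mid_expr_gap:
  assumes "0 < x" "x < pi/2"
  shows "varrho N * x^(2*N+2) \<le> mid_expr x - poly_part N x"
proof (rule sums_le[OF _ varrho_sums mid_expr_minus_poly_part_sums[OF assms]])
  fix k
  have "0 < pole_ratio x k" "pole_ratio x k < 1/4"
    using pole_ratio_bounds[OF assms] by auto
  then show "mid_coeff (N+1) * pole_ratio x k ^ (N+1) \<le> mid_tail N (pole_ratio x k)"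
    using mid_tail_Suc[of "pole_ratio x k" N] mid_tail_pos[of "pole_ratio x k" "N+1"] by simp
qed

lemma mid_expr_less_upper:
  assumes "N \<ge> 1" "0 < x" "x < pi/2"
  shows "mid_expr x < poly_part N x + varrho N * x^(2*N+1) * tan x"
proof -
  let ?c = "mid_coeff (N+1)"
  have "mid_tail N (pole_ratio x k) < ?c * pole_ratio x k ^ (N+1) * (1 + x^2/3)" for k
  proof -
    have s: "0 < pole_ratio x k" "pole_ratio x k < 1/4" "pi^2 * pole_ratio x k \<le> x^2"
      using pole_ratio_bounds[OF assms(2,3)] by auto
    then have "mid_tail N (pole_ratio x k) < ?c * pole_ratio x k ^ (N+1) * (1 + pi^2 * pole_ratio x k / 3)"
      using assms(1) by (intro mid_tail_less) auto
    also have "\<dots> \<le> ?c * pole_ratio x k ^ (N+1) * (1 + x^2/3)"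
      using s mid_coeff_ge[of "N+1"] assms(1) by (intro mult_left_mono) auto
    finally show ?thesis .
  qed
  then have "mid_expr x - poly_part N x < varrho N * x^(2*N+2) * (1 + x^2/3)"
    by (rule sums_less[OF _ mid_expr_minus_poly_part_sums[OF assms(2,3)] sums_mult2[OF varrho_sums]])
  also have "\<dots> = varrho N * x^(2*N+1) * (x + x^3/3)"
    by (simp add: algebra_simps power2_eq_square power3_eq_cube)
  also have "\<dots> \<le> varrho N * x^(2*N+1) * tan x"
    using assms tan_ge_cubic[of x] varrho_nonneg[of N] by (intro mult_left_mono) auto
  finally show ?thesis
    by simp
qed

lemma zero_lower_const_optimal:
  assumes "\<forall>x. 0 < x \<and> x < pi/2 \<longrightarrow> poly_part N x + c * x^(2*N+1) * tan x < mid_expr x"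
  shows "c \<le> 0"
proof (rule ccontr)
  assume "\<not> c \<le> 0"
  have "((\<lambda>x. (2 * x + x * cos x) / sin x) \<longlongrightarrow> (2 * (pi/2) + pi/2 * cos (pi/2)) / sin (pi/2))
      (at_left (pi/2))"
    by (intro tendsto_intros) auto
  moreover have "mid_expr = (\<lambda>x. (2 * x + x * cos x) / sin x)"
    by (simp add: fun_eq_iff mid_expr_def tan_def add_divide_distrib)
  ultimately have "(mid_expr \<longlongrightarrow> pi) (at_left (pi/2))"
    by simp
  then have "eventually (\<lambda>x. mid_expr x < pi + 1) (at_left (pi/2))"
    by (rule order_tendstoD) simp
  moreover have "filterlim (\<lambda>x. c * x^(2*N+1) * tan x) at_top (at_left (pi/2))"
  proof (rule filterlim_tendsto_pos_mult_at_top[OF _ _ filterlim_tan_at_left])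
    show "((\<lambda>x. c * x^(2*N+1)) \<longlongrightarrow> c * (pi/2)^(2*N+1)) (at_left (pi/2))"
      by (intro tendsto_intros)
    show "0 < c * (pi/2)^(2*N+1)"
      using \<open>\<not> c \<le> 0\<close> by simp
  qed
  then have "eventually (\<lambda>x. pi + 1 \<le> c * x^(2*N+1) * tan x) (at_left (pi/2))"
    by (simp add: filterlim_at_top)
  moreover have "eventually (\<lambda>x. 0 < x \<and> x < pi/2) (at_left (pi/2))"
    by (intro eventually_at_leftI[of 0]) auto
  ultimately have "eventually (\<lambda>x. False) (at_left (pi/2))"
  proof eventually_elim
    case (elim x)
    then show False
      using assms poly_part_ge_3[of N x] by force
  qed
  then show False
    by simp
qed

lemma varrho_upper_const_optimal:
  assumes "\<forall>x. 0 < x \<and> x < pi/2 \<longrightarrow> mid_expr x < poly_part N x + c * x^(2*N+1) * tan x"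
  shows "varrho N \<le> c"
proof (rule tendsto_lowerbound[of "\<lambda>x. c * (tan x / x)" c "at_right 0"])
  show "((\<lambda>x. c * (tan x / x)) \<longlongrightarrow> c) (at_right 0)"
    using tendsto_mult[OF tendsto_const[of c] tendsto_mono[OF at_le tan_over_self_tendsto]] by simp
  show "eventually (\<lambda>x. varrho N \<le> c * (tan x / x)) (at_right 0)"
  proof (rule eventually_at_rightI[of 0 "pi/2"])
    fix x :: real
    assume "x \<in> {0<..<pi/2}"
    then have x: "0 < x" "x < pi/2"
      by auto
    then have "mid_expr x < poly_part N x + c * x^(2*N+1) * tan x"
      using assms by blast
    then have "varrho N * x^(2*N+2) < c * x^(2*N+1) * tan x"
      using varrho_le_mid_expr_gap[OF x, of N] by linarith
    moreover have "varrho N * x^(2*N+2) = (varrho N * x) * x^(2*N+1)"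
      by (simp add: mult_ac)
    ultimately have "(varrho N * x) * x^(2*N+1) < (c * tan x) * x^(2*N+1)"
      by (simp add: mult_ac)
    then have "varrho N * x < c * tan x"
      using x by (simp add: mult_less_cancel_right)
    then show "varrho N \<le> c * (tan x / x)"
      using x by (simp add: field_simps)
  qed simp
qed simp

theorem theorem10:
  fixes N :: nat
  assumes "N \<ge> 1"
  defines "vr \<equiv> 4 * (2^(2*N) - 1) * \<bar>bernoulli (2*N+2)\<bar> / fact (2*N+2)"
  shows "(\<forall>x::real. 0 < x \<and> x < pi/2 \<longrightarrow>
            poly_part N x + 0 * x^(2*N+1) * tan x < mid_expr x \<and>
            mid_expr x < poly_part N x + vr * x^(2*N+1) * tan x)
       \<and> (\<forall>c::real. (\<forall>x::real. 0 < x \<and> x < pi/2 \<longrightarrow>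
               poly_part N x + c * x^(2*N+1) * tan x < mid_expr x) \<longrightarrow> c \<le> 0)
       \<and> (\<forall>c::real. (\<forall>x::real. 0 < x \<and> x < pi/2 \<longrightarrow>
               mid_expr x < poly_part N x + c * x^(2*N+1) * tan x) \<longrightarrow> vr \<le> c)"
proof -
  have "vr = varrho N"
    by (simp add: vr_def varrho_def)
  then show ?thesis
    using poly_part_less_mid_expr mid_expr_less_upper[OF assms(1)]
      zero_lower_const_optimal varrho_upper_const_optimal
    by auto
qed

end
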